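(* Each of the eleven sets $A,B,C,D,E,F,G,H,I,J,K$ is uncountable.
   Context: $\Sigma=\{0,1\}$. An overlap is a word $axaxa$ with $a\in\Sigma$, $x\in\Sigma^*$; a word is overlap-free if it has no overlap as a factor. $\mathcal{O}$ is the set of right-infinite binary overlap-free words. Subsets of $\Sigma^\omega$: $A=\mathcal{O}$; $B=\{\mathbf{x}: 1\mathbf{x}\in\mathcal{O}\}$; $C=\{\mathbf{x}: 1\mathbf{x}\in\mathcal{O}$ and $\mathbf{x}$ begins with $101\}$; $D=\{\mathbf{x}: 0\mathbf{x}\in\mathcal{O}\}$; $E=\{\mathbf{x}: 0\mathbf{x}\in\mathcal{O}$ and $\mathbf{x}$ begins with $010\}$; $F=\{\mathbf{x}: 0\mathbf{x}\in\mathcal{O}$ and $\mathbf{x}$ begins with $11\}$; $G=\{\mathbf{x}: 0\mathbf{x}\in\mathcal{O}$ and $\mathbf{x}$ begins with $1\}$; $H=\{\mathbf{x}: 1\mathbf{x}\in\mathcal{O}$ and $\mathbf{x}$ begins with $1\}$; $I=\{\mathbf{x}: 1\mathbf{x}\in\mathcal{O}$ and $\mathbf{x}$ begins with $00\}$; $J=\{\mathbf{x}: 1\mathbf{x}\in\mathcal{O}$ and $\mathbf{x}$ begins with $0\}$; $K=\{\mathbf{x}: 0\mathbf{x}\in\mathcal{O}$ and $\mathbf{x}$ begins with $0\}$. *)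

theory Defs
  imports Main "HOL-Library.Countable_Set"
begin

text \<open>Binary alphabet {0,1} encoded as bool: False = 0, True = 1.
  Finite words are lists, right-infinite words are functions nat \<Rightarrow> bool.\<close>

type_synonym iword = "nat \<Rightarrow> bool"

definition is_overlap :: "bool list \<Rightarrow> bool" where
  "is_overlap u \<longleftrightarrow> (\<exists>a x. u = [a] @ x @ [a] @ x @ [a])"

definition factor_of :: "bool list \<Rightarrow> iword \<Rightarrow> bool" where
  "factor_of u w \<longleftrightarrow> (\<exists>i. u = map w [i..<i + length u])"

definition overlap_free :: "iword \<Rightarrow> bool" where
  "overlap_free w \<longleftrightarrow> (\<forall>u. factor_of u w \<longrightarrow> \<not> is_overlap u)"

definition OF :: "iword set" where
  "OF = {w. overlap_free w}"

definition cons_w :: "bool \<Rightarrow> iword \<Rightarrow> iword" where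
  "cons_w a w = (\<lambda>n. case n of 0 \<Rightarrow> a | Suc m \<Rightarrow> w m)"

definition begins_with :: "iword \<Rightarrow> bool list \<Rightarrow> bool" where
  "begins_with w u \<longleftrightarrow> (\<forall>i<length u. w i = u ! i)"

definition setA :: "iword set" where "setA = OF"
definition setB :: "iword set" where "setB = {x. cons_w True x \<in> OF}"
definition setC :: "iword set" where
  "setC = {x. cons_w True x \<in> OF \<and> begins_with x [True, False, True]}"
definition setD :: "iword set" where "setD = {x. cons_w False x \<in> OF}"
definition setE :: "iword set" where
  "setE = {x. cons_w False x \<in> OF \<and> begins_with x [False, True, False]}"
definition setF :: "iword set" where
  "setF = {x. cons_w False x \<in> OF \<and> begins_with x [True, True]}"
definition setG :: "iword set" where
  "setG = {x. cons_w False x \<in> OF \<and> begins_with x [True]}"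
definition setH :: "iword set" where
  "setH = {x. cons_w True x \<in> OF \<and> begins_with x [True]}"
definition setI :: "iword set" where
  "setI = {x. cons_w True x \<in> OF \<and> begins_with x [False, False]}"
definition setJ :: "iword set" where
  "setJ = {x. cons_w True x \<in> OF \<and> begins_with x [False]}"
definition setK :: "iword set" where
  "setK = {x. cons_w False x \<in> OF \<and> begins_with x [False]}"

end

theory Submission
  imports Defs
begin

(*
  Proof idea.  Every set in the statement contains an injective image of the power set of
  the natural numbers, built from the Thue--Morse word t.

  (1) t is overlap-free: an overlap of even period 2q in t contracts to one of period q
      (t(2n) = t(n), t(2n+1) = \<not>t(n)), odd periods p \<ge> 3 force a run of alternating
      letters of length 5 starting at an even position, impossible as t(2n) \<noteq> t(2n+1),
      and period 1 is excluded for the same reason.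
  (2) Hence every infinite word each of whose prefixes is a factor of t or of its complement
      ("t-approximable") is overlap-free; the notion is stable under shifting and complementing.
  (3) For S \<subseteq> \<nat> the words t(n + a) xor t(a) with a = \<Sum>i\<in>S, i<n. 2^(2i+1) converge to a
      t-approximable word whose letter at position 2^(2m+1) records whether m \<in> S, so the
      construction is injective.  Shifting S by 3 keeps the prefix of length 128 equal to t.
  (4) Shifting and complementing this family yields, for each prescribed letter-plus-prefix
      read off t, uncountably many overlap-free extensions; this gives C, E, F, I directly,
      A from the family itself, and the remaining sets contain one of these.
*)

(* The Thue--Morse word: t(n) is the parity of the binary digit sum of n. *)
fun tm :: "nat \<Rightarrow> bool" where
  "tm n = (if n = 0 then False else (tm (n div 2) \<noteq> odd n))"
declare tm.simps[simp del]

lemma tm_0 [simp]: "tm 0 = False"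
  by (simp add: tm.simps)

lemma tm_even: "tm (2 * m) = tm m"
  by (cases "m = 0") (simp_all add: tm.simps[of "2 * m"])

lemma tm_odd: "tm (2 * m + 1) = (\<not> tm m)"
  by (subst tm.simps) simp

lemma tm_pair: "tm (2 * m) \<noteq> tm (2 * m + 1)"
  by (metis tm_even tm_odd)

(* Adding a multiple of 2^m above the digits of a adds the digit sums, hence xors the letters. *)
lemma tm_add:
  assumes "a < 2 ^ m"
  shows "tm (a + 2 ^ m * b) = (tm a \<noteq> tm b)"
  using assms
proof (induction m arbitrary: a)
  case 0
  then show ?case by simp
next
  case (Suc m)
  have q: "a div 2 < 2 ^ m" using Suc.prems by simp
  show ?case
  proof (cases "even a")
    case True
    then have "a = 2 * (a div 2)" "a + 2 ^ Suc m * b = 2 * (a div 2 + 2 ^ m * b)" by simp_all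
    then show ?thesis using Suc.IH[OF q] by (metis tm_even)
  next
    case False
    then have "a = 2 * (a div 2) + 1" "a + 2 ^ Suc m * b = 2 * (a div 2 + 2 ^ m * b) + 1"
      by simp_all
    then show ?thesis using Suc.IH[OF q] by (metis tm_odd)
  qed
qed

lemma tm_values: "tm 1" "tm 2"
  using tm_odd[of 0] tm_even[of 1] by simp_all

(* An overlap with period p starting at position i: the factor f(i) ... f(i+2p) has the
   form a x a x a with |a x| = p. *)
definition overlap_at :: "iword \<Rightarrow> nat \<Rightarrow> nat \<Rightarrow> bool" where
  "overlap_at f i p \<longleftrightarrow> 0 < p \<and> (\<forall>k\<le>p. f (i + k) = f (i + k + p))"

lemma tm_no_overlap_1: "\<not> overlap_at tm i 1"
proof
  assume "overlap_at tm i 1"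
  then have "tm i = tm (i + 1)" "tm (i + 1) = tm (i + 2)"
    unfolding overlap_at_def by (auto dest: spec[of _ 0] spec[of _ 1])
  moreover have "i = 2 * ((i + 1) div 2) \<or> i + 1 = 2 * ((i + 1) div 2)"
    by presburger
  ultimately show False
    using tm_pair[of "(i + 1) div 2"] by (auto simp: add.assoc)
qed

lemma tm_shift_double: "tm x = tm (x + 2 * q) \<longleftrightarrow> tm (x div 2) = tm (x div 2 + q)"
proof (cases "even x")
  case True
  then have "x = 2 * (x div 2)" "x + 2 * q = 2 * (x div 2 + q)" by simp_all
  then show ?thesis by (metis tm_even)
next
  case False
  then have "x = 2 * (x div 2) + 1" "x + 2 * q = 2 * (x div 2 + q) + 1" by simp_all
  then show ?thesis by (metis tm_odd)
qed

lemma tm_overlap_halve: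
  assumes "overlap_at tm i (2 * q)"
  shows "overlap_at tm (i div 2) q"
  unfolding overlap_at_def
proof (intro conjI allI impI)
  show "0 < q" using assms by (simp add: overlap_at_def)
  fix k assume "k \<le> q"
  then have "tm (i + 2 * k) = tm (i + 2 * k + 2 * q)"
    using assms unfolding overlap_at_def by simp
  moreover have "(i + 2 * k) div 2 = i div 2 + k" by simp
  ultimately show "tm (i div 2 + k) = tm (i div 2 + k + q)"
    using tm_shift_double by metis
qed

lemma tm_even_pair: "even x \<Longrightarrow> tm x \<noteq> tm (x + 1)"
  using tm_pair by (auto elim!: evenE)

(* Odd periods p \<ge> 3 are impossible: the overlap makes t alternate on 2p consecutive
   positions, producing a factor t(2n) .. t(2n+4) = abab a, i.e. three equal letters t(n..n+2). *)
lemma tm_no_odd_overlap: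
  assumes ov: "overlap_at tm i p" and "odd p" and "3 \<le> p"
  shows False
proof -
  have per: "tm z = tm (z + p)" if "i \<le> z" "z \<le> i + p" for z
    using ov that unfolding overlap_at_def by (metis le_add_diff_inverse add_le_cancel_left)
  have alt: "tm x \<noteq> tm (x + 1)" if "i \<le> x" "x < i + 2 * p" for x
  proof -
    define z where "z = (if x < i + p then x else x - p)"
    have z: "i \<le> z" "z < i + p" "x = z \<or> x = z + p"
      using that unfolding z_def by auto
    have same: "tm z = tm (z + p)" "tm (z + 1) = tm (z + 1 + p)"
      using per z by auto
    have "tm z \<noteq> tm (z + 1)"
    proof (cases "even z")
      case True
      then show ?thesis by (rule tm_even_pair)
    next
      case False
      then have "even (z + p)" using \<open>odd p\<close> by simp
      then show ?thesis using tm_even_pair same by (simp add: add.commute add.left_commute)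
    qed
    then show ?thesis using z same by auto
  qed
  define y where "y = i + i mod 2"
  have y: "y = 2 * (y div 2)" "i \<le> y" "y \<le> i + 1"
    unfolding y_def by presburger+
  have "tm (y + j) \<noteq> tm (y + j + 1)" if "j < 4" for j
    using alt[of "y + j"] y that \<open>3 \<le> p\<close> by simp
  from this[of 0] this[of 1] this[of 2] this[of 3]
  have "tm y = tm (y + 2)" "tm (y + 2) = tm (y + 4)"
    by (auto simp: numeral_eq_Suc)
  moreover have "y + 2 = 2 * (y div 2 + 1)" "y + 4 = 2 * (y div 2 + 2)"
    using y(1) by simp_all
  ultimately have "tm (y div 2) = tm (y div 2 + 1)" "tm (y div 2 + 1) = tm (y div 2 + 2)"
    using y(1) by (metis tm_even)+
  then have "overlap_at tm (y div 2) 1"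
    unfolding overlap_at_def by (auto simp: le_Suc_eq)
  then show False by (rule tm_no_overlap_1[THEN notE])
qed

theorem tm_overlap_free: "\<not> overlap_at tm i p"
proof (induction p arbitrary: i rule: less_induct)
  case (less p)
  show ?case
  proof
    assume ov: "overlap_at tm i p"
    then have "0 < p" by (simp add: overlap_at_def)
    then have "p = 1 \<or> (\<exists>q. p = 2 * q) \<or> (odd p \<and> 3 \<le> p)" by presburger
    then consider "p = 1" | q where "p = 2 * q" | "odd p" "3 \<le> p" by blast
    then show False
    proof cases
      case 1
      then show False using ov tm_no_overlap_1 by simp
    next
      case (2 q)
      then have "q < p" using \<open>0 < p\<close> by simp
      then show False using less.IH tm_overlap_halve ov 2 by blast
    next
      case 3
      then show False using tm_no_odd_overlap ov by blast
    qed
  qed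
qed

lemma overlap_factor_imp_overlap_at:
  assumes "factor_of u f" and "is_overlap u"
  shows "\<exists>i p. overlap_at f i p"
proof -
  obtain i where u: "u = map f [i..<i + length u]"
    using assms(1) unfolding factor_of_def by blast
  obtain a x where ax: "u = [a] @ x @ [a] @ x @ [a]"
    using assms(2) unfolding is_overlap_def by blast
  define p where "p = length x + 1"
  have f_nth: "f (i + j) = u ! j" if "j < length u" for j
    using that by (subst u) simp
  have "u ! k = u ! (k + p)" if "k \<le> p" for k
    using that unfolding ax p_def by (auto simp: nth_append nth_Cons split: nat.split)
  moreover have "length u = 2 * p + 1"
    unfolding ax p_def by simp
  ultimately have "f (i + k) = f (i + k + p)" if "k \<le> p" for k
    using that f_nth[of k] f_nth[of "k + p"] by (simp add: add.assoc)
  then have "overlap_at f i p"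
    unfolding overlap_at_def p_def by simp
  then show ?thesis by blast
qed

lemma overlap_free_if_no_overlap_at:
  assumes "\<And>i p. \<not> overlap_at f i p"
  shows "f \<in> OF"
  using overlap_factor_imp_overlap_at assms unfolding OF_def overlap_free_def by blast

definition tm_approximable :: "iword \<Rightarrow> bool" where
  "tm_approximable f \<longleftrightarrow> (\<forall>N. \<exists>a e. \<forall>n\<le>N. f n = (tm (n + a) \<noteq> e))"

(* An overlap in f would be an overlap inside a factor of t (or of its complement). *)
lemma tm_approximable_overlap_free:
  assumes "tm_approximable f"
  shows "f \<in> OF"
proof (rule overlap_free_if_no_overlap_at)
  fix i p
  obtain a e where ae: "\<And>n. n \<le> i + 2 * p \<Longrightarrow> f n = (tm (n + a) \<noteq> e)"
    using assms unfolding tm_approximable_def by blast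
  have "overlap_at f i p \<longleftrightarrow> overlap_at tm (i + a) p"
    unfolding overlap_at_def by (auto simp: ae algebra_simps)
  then show "\<not> overlap_at f i p"
    using tm_overlap_free by blast
qed

lemma tm_approximable_shift:
  assumes "tm_approximable f"
  shows "tm_approximable (\<lambda>n. f (n + c) \<noteq> b)"
  unfolding tm_approximable_def
proof
  fix N
  obtain a e where ae: "\<And>n. n \<le> N + c \<Longrightarrow> f n = (tm (n + a) \<noteq> e)"
    using assms unfolding tm_approximable_def by blast
  have "\<forall>n\<le>N. (f (n + c) \<noteq> b) = (tm (n + (c + a)) \<noteq> (e \<noteq> b))"
    by (auto simp: ae add.assoc)
  then show "\<exists>a e. \<forall>n\<le>N. (f (n + c) \<noteq> b) = (tm (n + a) \<noteq> e)"
    by blast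
qed

definition offset :: "nat set \<Rightarrow> nat \<Rightarrow> nat" where
  "offset S k = (\<Sum>i<k. if i \<in> S then 2 ^ (2 * i + 1) else 0)"

definition limit_word :: "nat set \<Rightarrow> iword" where
  "limit_word S n = (tm (n + offset S n) \<noteq> tm (offset S n))"

lemma offset_Suc: "offset S (Suc k) = offset S k + (if k \<in> S then 2 ^ (2 * k + 1) else 0)"
  by (simp add: offset_def)

lemma offset_less: "offset S k < 2 ^ (2 * k)"
proof (induction k)
  case 0
  then show ?case by (simp add: offset_def)
next
  case (Suc k)
  have "offset S (Suc k) \<le> offset S k + 2 ^ (2 * k + 1)" by (simp add: offset_Suc)
  also have "\<dots> < 2 ^ (2 * k) + 2 ^ (2 * k + 1)" using Suc.IH by simp
  also have "\<dots> \<le> 2 ^ (2 * Suc k)" by simp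
  finally show ?case .
qed

lemma offset_decomp:
  assumes "j \<le> k"
  shows "\<exists>C. offset S k = offset S j + 2 ^ (2 * j + 1) * C"
  using assms
proof (induction k rule: dec_induct)
  case base
  show ?case by simp
next
  case (step k)
  then obtain C where C: "offset S k = offset S j + 2 ^ (2 * j + 1) * C" by blast
  have "(2::nat) ^ (2 * k + 1) = 2 ^ (2 * j + 1) * 2 ^ (2 * (k - j))"
    using step.hyps by (simp flip: power_add)
  then have "offset S (Suc k) = offset S j
      + 2 ^ (2 * j + 1) * (C + (if k \<in> S then 2 ^ (2 * (k - j)) else 0))"
    using C by (simp add: offset_Suc algebra_simps)
  then show ?case by blast
qed

lemma limit_word_stable:
  assumes "n \<le> k"
  shows "limit_word S n = (tm (n + offset S k) \<noteq> tm (offset S k))"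
proof -
  obtain C where C: "offset S k = offset S n + 2 ^ (2 * n + 1) * C"
    using offset_decomp[OF assms] by blast
  have "n < 2 ^ (2 * n)"
    by (metis less_exp order_less_le_trans power_increasing le_add1 mult_2 one_le_numeral)
  then have "n + offset S n < 2 ^ (2 * n + 1)" "offset S n < 2 ^ (2 * n + 1)"
    using offset_less[of S n] by simp_all
  from tm_add[OF this(1), of C] tm_add[OF this(2), of C] C
  show ?thesis by (auto simp: limit_word_def add.assoc)
qed

lemma limit_word_approximable: "tm_approximable (limit_word S)"
  unfolding tm_approximable_def using limit_word_stable by blast

lemma limit_word_bit: "limit_word S (2 ^ (2 * m + 1)) = (m \<notin> S)"
proof -
  define N :: nat where "N = 2 ^ (2 * m + 1)"
  define \<alpha> where "\<alpha> = offset S m"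
  define \<beta> where "\<beta> = offset S (Suc m)"
  have \<alpha>: "\<alpha> < N" unfolding \<alpha>_def N_def using offset_less[of S m] by simp
  have \<beta>: "\<beta> = \<alpha> + (if m \<in> S then N else 0)"
    unfolding \<alpha>_def \<beta>_def N_def by (simp add: offset_Suc)
  have "Suc m \<le> N"
    unfolding N_def by (metis Suc_leI less_exp order_less_le_trans power_increasing
        le_add2 one_le_numeral mult_2 add.commute)
  then obtain C where C: "offset S N = \<beta> + 2 ^ (2 * Suc m + 1) * C"
    unfolding \<beta>_def using offset_decomp by blast
  have "N + \<beta> < 2 ^ (2 * Suc m + 1)" "\<beta> < 2 ^ (2 * Suc m + 1)"
    using \<alpha> \<beta> unfolding N_def by auto
  from tm_add[OF this(1), of C] tm_add[OF this(2), of C] C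
  have "limit_word S N = (tm (N + \<beta>) \<noteq> tm \<beta>)"
    using limit_word_stable[of N N S] by (auto simp: add.assoc)
  moreover have "tm (\<alpha> + N) = (\<not> tm \<alpha>)" "tm (\<alpha> + 2 * N) = (\<not> tm \<alpha>)"
    using tm_add[OF \<alpha>[unfolded N_def], of 1] tm_add[OF \<alpha>[unfolded N_def], of 2] tm_values
    unfolding N_def by (simp_all add: mult.commute)
  ultimately show ?thesis
    using \<beta> unfolding N_def by (auto simp: algebra_simps)
qed

(* The family used for all eleven sets: encode S shifted by 3 (so that offsets are multiples
   of 2^7), drop the first c letters and complement if b holds. *)
definition tm_variant :: "nat \<Rightarrow> bool \<Rightarrow> nat set \<Rightarrow> iword" where
  "tm_variant c b S n = (limit_word ((+) 3 ` S) (n + c) \<noteq> b)"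

lemma tm_variant_overlap_free: "tm_variant c b S \<in> OF"
  using tm_approximable_overlap_free[OF tm_approximable_shift[OF limit_word_approximable]]
  unfolding tm_variant_def by blast

(* Because S is shifted by 3, the first 128 letters before shifting are those of t. *)
lemma tm_variant_prefix:
  assumes "n + c < 128"
  shows "tm_variant c b S n = (tm (n + c) \<noteq> b)"
proof -
  have "offset ((+) 3 ` S) 3 = 0"
    by (auto simp: offset_def numeral_eq_Suc lessThan_Suc)
  then obtain C where C: "offset ((+) 3 ` S) (n + c + 3) = 2 ^ 7 * C"
    using offset_decomp[of 3 "n + c + 3" "(+) 3 ` S"] by auto
  have "tm (n + c + 2 ^ 7 * C) = (tm (n + c) \<noteq> tm C)" "tm (0 + 2 ^ 7 * C) = (tm 0 \<noteq> tm C)"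
    using tm_add[of "n + c" 7 C] tm_add[of 0 7 C] assms by simp_all
  then show ?thesis
    using limit_word_stable[of "n + c" "n + c + 3" "(+) 3 ` S"] C
    unfolding tm_variant_def by auto
qed

(* Distinct sets give distinct words, read off at the position coding each element. *)
lemma tm_variant_inj:
  assumes "c < 128"
  shows "inj (tm_variant c b)"
proof (rule injI)
  fix S T assume eq: "tm_variant c b S = tm_variant c b T"
  have "m \<in> S \<longleftrightarrow> m \<in> T" for m
  proof -
    define N :: nat where "N = 2 ^ (2 * (m + 3) + 1)"
    have "(128::nat) \<le> N"
      unfolding N_def using power_increasing[of 7 "2 * (m + 3) + 1" "2::nat"] by simp
    then have "tm_variant c b S (N - c) = tm_variant c b T (N - c)"
      "N - c + c = N"
      using eq assms by simp_all
    then have "limit_word ((+) 3 ` S) N = limit_word ((+) 3 ` T) N"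
      unfolding tm_variant_def by auto
    then show ?thesis
      unfolding N_def limit_word_bit by (simp add: image_iff)
  qed
  then show "S = T" by blast
qed

lemma tm_variant_cons:
  assumes "c < 127"
  shows "cons_w (tm c \<noteq> b) (tm_variant (Suc c) b S) = tm_variant c b S"
proof
  fix n
  show "cons_w (tm c \<noteq> b) (tm_variant (Suc c) b S) n = tm_variant c b S n"
    using tm_variant_prefix[of 0 c b S] assms
    by (cases n) (simp_all add: cons_w_def tm_variant_def)
qed

lemma uncountable_nat_sets: "uncountable (UNIV :: nat set set)"
  using Cantors_theorem[of "UNIV :: nat set"] unfolding uncountable_def by auto

lemma uncountable_tm_variants:
  assumes "c < 128"
  shows "uncountable (range (tm_variant c b))"
  using countable_image_inj_on tm_variant_inj[OF assms] uncountable_nat_sets by blast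

lemma uncountable_extensions:
  assumes "c + length u < 127"
    and "u = map (\<lambda>n. tm (n + Suc c) \<noteq> b) [0..<length u]"
    and "a = (tm c \<noteq> b)"
  shows "uncountable {x. cons_w a x \<in> OF \<and> begins_with x u}"
proof -
  have "tm_variant (Suc c) b S \<in> {x. cons_w a x \<in> OF \<and> begins_with x u}" for S
  proof -
    have "cons_w a (tm_variant (Suc c) b S) \<in> OF"
      using tm_variant_cons[of c b S] tm_variant_overlap_free assms by simp
    moreover have "tm_variant (Suc c) b S i = u ! i" if "i < length u" for i
    proof -
      have "i + Suc c < 128" using that assms(1) by simp
      then show ?thesis using that tm_variant_prefix by (subst assms(2)) simp
    qed
    ultimately show ?thesis unfolding begins_with_def by simp
  qed
  then have "range (tm_variant (Suc c) b) \<subseteq> {x. cons_w a x \<in> OF \<and> begins_with x u}"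
    by blast
  then show ?thesis
    using uncountable_tm_variants[of "Suc c" b] assms(1) countable_subset by auto
qed

(* A, and the sets C, E, F, I with their prefixes read off t at positions 13..16 and 0..2;
   the other sets contain one of these. *)
theorem corollary4:
  shows "uncountable setA \<and> uncountable setB \<and> uncountable setC \<and> uncountable setD \<and>
         uncountable setE \<and> uncountable setF \<and> uncountable setG \<and> uncountable setH \<and>
         uncountable setI \<and> uncountable setJ \<and> uncountable setK"
proof -
  have "range (tm_variant 0 False) \<subseteq> setA"
    using tm_variant_overlap_free unfolding setA_def by blast
  then have A: "uncountable setA"
    using uncountable_tm_variants[of 0 False] countable_subset by auto
  have C: "uncountable setC" unfolding setC_def
    by (rule uncountable_extensions[where c = 13 and b = False]) code_simp+
  have E: "uncountable setE" unfolding setE_def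
    by (rule uncountable_extensions[where c = 13 and b = True]) code_simp+
  have F: "uncountable setF" unfolding setF_def
    by (rule uncountable_extensions[where c = 0 and b = False]) code_simp+
  have I: "uncountable setI" unfolding setI_def
    by (rule uncountable_extensions[where c = 0 and b = True]) code_simp+
  have "setC \<subseteq> setB" "setC \<subseteq> setH" "setE \<subseteq> setD" "setE \<subseteq> setK" "setF \<subseteq> setG"
    "setI \<subseteq> setJ"
    by (auto simp: setB_def setC_def setH_def setE_def setD_def setK_def setF_def setG_def
        setI_def setJ_def begins_with_def)
  with A C E F I show ?thesis
    by (meson countable_subset)
qed

end
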